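(* There is exactly one isomorphism class of two-dimensional evolution algebras $A$ over a field $\mathbb{K}$ such that $\dim(A^2)=1$ and $A^3=0$ (namely the algebra $A_6$ with natural basis $\{e_1,e_2\}$, $e_1^2=0$, $e_2^2=e_1$). Its square is $\mathfrak{D}_6$, and this algebra is associative.
   Context: An evolution algebra over $\mathbb{K}$ is a $\mathbb{K}$-algebra with a basis $\{e_i\}$ (natural basis) such that $e_ie_j=0$ for $i\neq j$. $A^2$ is the span of $\{xy:x,y\in A\}$ and $A^3$ the span of $\{xy:x\in A,y\in A^2\}$. For a natural basis $\{e_1,e_2\}$ with $e_1^2=\omega_{11}e_1+\omega_{21}e_2$, $e_2^2=\omega_{12}e_1+\omega_{22}e_2$, its pseudo-square is the subset of $\{L,T,R,D\}$ where $L,T,R,D$ are present iff $\omega_{11},\omega_{12},\omega_{22},\omega_{21}$ respectively are nonzero; the square of $A$ is the set of pseudo-squares of all natural bases; $\mathfrak{D}_6=\{\{D\},\{T\}\}$. *)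

theory Defs
  imports Main
begin

text \<open>A two-dimensional algebra over a field 'a is modelled on the coordinate
space 'a \<times> 'a (every 2-dimensional vector space is isomorphic to it) together
with a bilinear multiplication.\<close>

type_synonym 'a vec2 = "'a \<times> 'a"
type_synonym 'a alg2 = "'a vec2 \<Rightarrow> 'a vec2 \<Rightarrow> 'a vec2"

definition vzero :: "'a::field vec2" where "vzero = (0, 0)"

definition vadd :: "'a::field vec2 \<Rightarrow> 'a vec2 \<Rightarrow> 'a vec2" where
  "vadd u v = (fst u + fst v, snd u + snd v)"

definition smul :: "'a::field \<Rightarrow> 'a vec2 \<Rightarrow> 'a vec2" where
  "smul c u = (c * fst u, c * snd u)"

definition bilinear2 :: "'a::field alg2 \<Rightarrow> bool" where
  "bilinear2 M \<longleftrightarrow>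
     (\<forall>u v w. M (vadd u v) w = vadd (M u w) (M v w)) \<and>
     (\<forall>u v w. M u (vadd v w) = vadd (M u v) (M u w)) \<and>
     (\<forall>c u v. M (smul c u) v = smul c (M u v)) \<and>
     (\<forall>c u v. M u (smul c v) = smul c (M u v))"

text \<open>Two vectors of a 2-dimensional space form a basis iff they are linearly independent.\<close>
definition is_basis2 :: "'a::field vec2 \<Rightarrow> 'a vec2 \<Rightarrow> bool" where
  "is_basis2 b1 b2 \<longleftrightarrow>
     (\<forall>a b. vadd (smul a b1) (smul b b2) = vzero \<longrightarrow> a = 0 \<and> b = 0)"

definition natural_basis :: "'a::field alg2 \<Rightarrow> 'a vec2 \<Rightarrow> 'a vec2 \<Rightarrow> bool" where
  "natural_basis M b1 b2 \<longleftrightarrow> is_basis2 b1 b2 \<and> M b1 b2 = vzero \<and> M b2 b1 = vzero"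

definition evolution_algebra2 :: "'a::field alg2 \<Rightarrow> bool" where
  "evolution_algebra2 M \<longleftrightarrow> bilinear2 M \<and> (\<exists>b1 b2. natural_basis M b1 b2)"

inductive_set vspan :: "'a::field vec2 set \<Rightarrow> 'a vec2 set" for S where
  vspan_zero: "vzero \<in> vspan S"
| vspan_base: "s \<in> S \<Longrightarrow> s \<in> vspan S"
| vspan_add: "u \<in> vspan S \<Longrightarrow> v \<in> vspan S \<Longrightarrow> vadd u v \<in> vspan S"
| vspan_smul: "u \<in> vspan S \<Longrightarrow> smul c u \<in> vspan S"

definition alg_sq :: "'a::field alg2 \<Rightarrow> 'a vec2 set" where
  "alg_sq M = vspan {M x y | x y. True}"

definition alg_cube :: "'a::field alg2 \<Rightarrow> 'a vec2 set" where
  "alg_cube M = vspan {M x y | x y. y \<in> alg_sq M}"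

definition dim_one :: "'a::field vec2 set \<Rightarrow> bool" where
  "dim_one V \<longleftrightarrow> (\<exists>v. v \<noteq> vzero \<and> V = {smul c v | c. True})"

definition linear2 :: "('a::field vec2 \<Rightarrow> 'a vec2) \<Rightarrow> bool" where
  "linear2 f \<longleftrightarrow> (\<forall>u v. f (vadd u v) = vadd (f u) (f v)) \<and> (\<forall>c u. f (smul c u) = smul c (f u))"

definition alg_isomorphic :: "'a::field alg2 \<Rightarrow> 'a alg2 \<Rightarrow> bool" where
  "alg_isomorphic M N \<longleftrightarrow>
     (\<exists>f. linear2 f \<and> bij f \<and> (\<forall>x y. f (M x y) = N (f x) (f y)))"

definition alg_associative :: "'a::field alg2 \<Rightarrow> bool" where
  "alg_associative M \<longleftrightarrow> (\<forall>x y z. M (M x y) z = M x (M y z))"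

text \<open>The algebra A6: natural basis e1 = (1,0), e2 = (0,1), e1^2 = 0, e2^2 = e1,
  e1 e2 = e2 e1 = 0, extended bilinearly.\<close>
definition A6 :: "'a::field alg2" where
  "A6 u v = (snd u * snd v, 0)"

datatype letter = L | T | R | D

text \<open>Structure constants w.r.t. a natural basis: b1^2 = w11 b1 + w21 b2,
  b2^2 = w12 b1 + w22 b2 (unique since b1, b2 is a basis).\<close>
definition coords :: "'a::field vec2 \<Rightarrow> 'a vec2 \<Rightarrow> 'a vec2 \<Rightarrow> 'a \<times> 'a" where
  "coords b1 b2 v = (THE p. v = vadd (smul (fst p) b1) (smul (snd p) b2))"

definition pseudo_square :: "'a::field alg2 \<Rightarrow> 'a vec2 \<Rightarrow> 'a vec2 \<Rightarrow> letter set" where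
  "pseudo_square M b1 b2 =
     (let (w11, w21) = coords b1 b2 (M b1 b1); (w12, w22) = coords b1 b2 (M b2 b2) in
        {x. (x = L \<and> w11 \<noteq> 0) \<or> (x = T \<and> w12 \<noteq> 0) \<or> (x = R \<and> w22 \<noteq> 0) \<or> (x = D \<and> w21 \<noteq> 0)})"

definition alg_square :: "'a::field alg2 \<Rightarrow> letter set set" where
  "alg_square M = {pseudo_square M b1 b2 | b1 b2. natural_basis M b1 b2}"

definition D6 :: "letter set set" where
  "D6 = {{D}, {T}}"

end

theory Submission
  imports Defs
begin

(* Let b1, b2 be a natural basis. As b1 b2 = 0, writing b1^2 = a b1 + b b2 gives
   b1 b1^2 = a b1^2, and this vanishes because A^3 = 0; so b1^2 is a multiple of b2 and,
   symmetrically, b2^2 is a multiple of b1. Both squares lie in the line A^2, so they cannot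
   both be nonzero, and they cannot both vanish since A^2 <> 0. If b1^2 = 0 and b2^2 = k b1
   with k <> 0, then k b1, b2 is a natural basis with the multiplication table of A6.
   For A6 itself, a natural basis (a, b), (c, d) has b d = 0, and the cases b = 0 and
   d = 0 give the pseudo-squares {T} and {D}. *)

lemma vec2_simps [simp]:
  "smul c vzero = vzero" "smul 0 u = vzero" "smul 1 u = u" "vadd vzero u = u" "vadd u vzero = u"
  by (simp_all add: smul_def vzero_def vadd_def)

lemma smul_smul: "smul a (smul b u) = smul (a * b) u"
  by (simp add: smul_def algebra_simps)

lemma smul_eq_vzero_iff: "smul a (u :: 'a::field vec2) = vzero \<longleftrightarrow> a = 0 \<or> u = vzero"
  by (cases u) (auto simp: smul_def vzero_def)

lemma is_basis2_iff_det:
  "is_basis2 (u :: 'a::field vec2) v \<longleftrightarrow> fst u * snd v - snd u * fst v \<noteq> 0"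
proof
  assume basis: "is_basis2 u v"
  let ?det = "fst u * snd v - snd u * fst v"
  have "vadd (smul (snd v) u) (smul (- snd u) v) = (?det, 0)"
    and "vadd (smul (- fst v) u) (smul (fst u) v) = (0, ?det)"
    by (simp_all add: vadd_def smul_def algebra_simps)
  moreover have "vadd (smul 1 u) (smul 0 v) = u"
    by (simp add: vadd_def smul_def)
  ultimately show "?det \<noteq> 0"
    using basis unfolding is_basis2_def vzero_def
    by (metis neg_equal_0_iff_equal prod.collapse zero_neq_one)
next
  assume det: "fst u * snd v - snd u * fst v \<noteq> 0"
  show "is_basis2 u v" unfolding is_basis2_def
  proof (intro allI impI)
    fix s t
    assume "vadd (smul s u) (smul t v) = vzero"
    then have eqs: "s * fst u + t * fst v = 0" "s * snd u + t * snd v = 0"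
      by (simp_all add: vadd_def smul_def vzero_def)
    have "s * (fst u * snd v - snd u * fst v)
        = snd v * (s * fst u + t * fst v) - fst v * (s * snd u + t * snd v)"
      and "t * (fst u * snd v - snd u * fst v)
        = fst u * (s * snd u + t * snd v) - snd u * (s * fst u + t * fst v)"
      by (simp_all add: algebra_simps)
    then show "s = 0 \<and> t = 0" using eqs det by simp
  qed
qed

lemma is_basis2_commute: "is_basis2 u v \<longleftrightarrow> is_basis2 v u"
  by (auto simp: is_basis2_iff_det algebra_simps)

lemma is_basis2_smul_smul_iff:
  "is_basis2 (smul a u) (smul b v) \<longleftrightarrow> a \<noteq> 0 \<and> b \<noteq> 0 \<and> is_basis2 u v"
proof -
  have "fst (smul a u) * snd (smul b v) - snd (smul a u) * fst (smul b v)
      = a * b * (fst u * snd v - snd u * fst v)"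
    by (simp add: smul_def algebra_simps)
  then show ?thesis by (simp add: is_basis2_iff_det)
qed

lemma not_is_basis2_smul_smul: "\<not> is_basis2 (smul s w) (smul t w)"
  by (simp add: is_basis2_iff_det smul_def)

lemma is_basis2_spans:
  assumes "is_basis2 (u :: 'a::field vec2) v"
  obtains s t where "x = vadd (smul s u) (smul t v)"
proof -
  obtain a b c d where uv: "u = (a, b)" "v = (c, d)" by fastforce
  define \<delta> where "\<delta> = a * d - b * c"
  have det: "\<delta> \<noteq> 0" using assms uv by (simp add: is_basis2_iff_det \<delta>_def)
  \<comment> \<open>Cramer's rule\<close>
  define s where "s = (fst x * d - snd x * c) / \<delta>"
  define t where "t = (a * snd x - b * fst x) / \<delta>"
  have "s * a + t * c = ((fst x * d - snd x * c) * a + (a * snd x - b * fst x) * c) / \<delta>"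
    and "s * b + t * d = ((fst x * d - snd x * c) * b + (a * snd x - b * fst x) * d) / \<delta>"
    by (simp_all add: s_def t_def add_divide_distrib)
  moreover have "(fst x * d - snd x * c) * a + (a * snd x - b * fst x) * c = fst x * \<delta>"
    and "(fst x * d - snd x * c) * b + (a * snd x - b * fst x) * d = snd x * \<delta>"
    by (simp_all add: \<delta>_def algebra_simps)
  ultimately have "s * a + t * c = fst x" and "s * b + t * d = snd x"
    using det by simp_all
  then have "x = vadd (smul s u) (smul t v)"
    by (simp add: uv vadd_def smul_def prod_eq_iff)
  then show thesis by (rule that)
qed

lemma coords_eq:
  assumes "is_basis2 b1 b2" and "w = vadd (smul s b1) (smul t b2)"
  shows "coords b1 b2 w = (s, t)"
  unfolding coords_def
proof (rule the_equality)
  fix p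
  assume "w = vadd (smul (fst p) b1) (smul (snd p) b2)"
  then have "vadd (smul (fst p - s) b1) (smul (snd p - t) b2) = vzero"
    using assms(2) by (simp add: vadd_def smul_def vzero_def algebra_simps prod_eq_iff)
  then have "fst p - s = 0 \<and> snd p - t = 0"
    using assms(1) unfolding is_basis2_def by blast
  then show "p = (s, t)" by (simp add: prod_eq_iff)
qed (use assms(2) in simp)

lemma bilinear2_lincomb_left:
  assumes "bilinear2 M"
  shows "M (vadd (smul a u) (smul b v)) w = vadd (smul a (M u w)) (smul b (M v w))"
proof -
  have "\<And>u v w. M (vadd u v) w = vadd (M u w) (M v w)"
    and "\<And>c u v. M (smul c u) v = smul c (M u v)"
    using assms unfolding bilinear2_def by blast+
  then show ?thesis by (simp only:)
qed

lemma bilinear2_lincomb_right: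
  assumes "bilinear2 M"
  shows "M w (vadd (smul a u) (smul b v)) = vadd (smul a (M w u)) (smul b (M w v))"
proof -
  have "\<And>u v w. M u (vadd v w) = vadd (M u v) (M u w)"
    and "\<And>c u v. M u (smul c v) = smul c (M u v)"
    using assms unfolding bilinear2_def by blast+
  then show ?thesis by (simp only:)
qed

lemma bilinear2_smul_smul:
  assumes "bilinear2 M"
  shows "M (smul a u) (smul b v) = smul (a * b) (M u v)"
proof -
  have "\<And>c u v. M (smul c u) v = smul c (M u v)"
    and "\<And>c u v. M u (smul c v) = smul c (M u v)"
    using assms unfolding bilinear2_def by blast+
  then show ?thesis by (simp only: smul_smul mult.commute)
qed

lemma linear2_inv:
  assumes lin: "linear2 f" and bij: "bij f"
  shows "linear2 (inv f)"
proof -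
  have add: "f (vadd u v) = vadd (f u) (f v)" and scale: "f (smul c u) = smul c (f u)" for c u v
    using lin unfolding linear2_def by blast+
  have inv_eqI: "inv f y = x" if "f x = y" for x y
    using bij that by (metis bij_inv_eq_iff)
  have f_inv: "f (inv f y) = y" for y
    using bij by (simp add: bij_is_surj surj_f_inv_f)
  show ?thesis unfolding linear2_def
    by (intro conjI allI inv_eqI) (simp_all add: add scale f_inv)
qed

lemma alg_isomorphic_sym:
  assumes "alg_isomorphic M N"
  shows "alg_isomorphic N M"
proof -
  obtain f where lin: "linear2 f" and bij: "bij f" and hom: "\<And>x y. f (M x y) = N (f x) (f y)"
    using assms unfolding alg_isomorphic_def by blast
  have "inv f (N x y) = M (inv f x) (inv f y)" for x y
    using hom[of "inv f x" "inv f y"] bij by (metis bij_inv_eq_iff)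
  with linear2_inv[OF lin bij] bij_imp_bij_inv[OF bij] show ?thesis
    unfolding alg_isomorphic_def by blast
qed

definition from_coords :: "'a::field vec2 \<Rightarrow> 'a vec2 \<Rightarrow> 'a \<times> 'a \<Rightarrow> 'a vec2" where
  "from_coords b1 b2 p = vadd (smul (fst p) b1) (smul (snd p) b2)"

lemma linear2_from_coords: "linear2 (from_coords b1 b2)"
  unfolding linear2_def from_coords_def by (simp add: vadd_def smul_def algebra_simps)

lemma coords_from_coords:
  "is_basis2 b1 b2 \<Longrightarrow> coords b1 b2 (from_coords b1 b2 p) = p"
  using coords_eq[of b1 b2 _ "fst p" "snd p"] by (simp add: from_coords_def)

lemma bij_from_coords:
  assumes "is_basis2 b1 b2"
  shows "bij (from_coords b1 b2)"
proof (rule bijI)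
  show "inj (from_coords b1 b2)"
    by (rule inj_on_inverseI[where g = "coords b1 b2"]) (simp add: coords_from_coords assms)
  have "x \<in> range (from_coords b1 b2)" for x
  proof -
    obtain s t where "x = vadd (smul s b1) (smul t b2)"
      using assms by (rule is_basis2_spans)
    then have "x = from_coords b1 b2 (s, t)" by (simp add: from_coords_def)
    then show ?thesis by blast
  qed
  then show "surj (from_coords b1 b2)" by blast
qed

lemma alg_isomorphic_A6_if_natural_basis:
  fixes M :: "'a::field alg2"
  assumes bil: "bilinear2 M" and nb: "natural_basis M f1 f2"
    and sq1: "M f1 f1 = vzero" and sq2: "M f2 f2 = f1"
  shows "alg_isomorphic M A6"
proof -
  have "M f1 f2 = vzero" and "M f2 f1 = vzero" and basis: "is_basis2 f1 f2"
    using nb unfolding natural_basis_def by blast+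
  then have "from_coords f1 f2 (A6 u w) = M (from_coords f1 f2 u) (from_coords f1 f2 w)" for u w
    using sq1 sq2
    by (simp add: from_coords_def A6_def bilinear2_lincomb_left[OF bil]
        bilinear2_lincomb_right[OF bil]) (simp add: vadd_def smul_def)
  then have "alg_isomorphic A6 M"
    using linear2_from_coords bij_from_coords[OF basis] unfolding alg_isomorphic_def by blast
  then show ?thesis by (rule alg_isomorphic_sym)
qed

lemma natural_basis_commute: "natural_basis M b1 b2 \<longleftrightarrow> natural_basis M b2 b1"
  unfolding natural_basis_def using is_basis2_commute by blast

lemma natural_basis_smul_left:
  assumes "bilinear2 M" and "k \<noteq> 0" and "natural_basis M b1 b2"
  shows "natural_basis M (smul k b1) b2"
proof -
  have "M (smul k b1) b2 = smul k (M b1 b2)" and "M b2 (smul k b1) = smul k (M b2 b1)"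
    using assms(1) unfolding bilinear2_def by blast+
  then show ?thesis
    using assms(2,3) is_basis2_smul_smul_iff[of k b1 1 b2] unfolding natural_basis_def by simp
qed

lemma alg_isomorphic_A6_if_square_eq_smul:
  fixes M :: "'a::field alg2"
  assumes bil: "bilinear2 M" and nb: "natural_basis M b1 b2"
    and sq1: "M b1 b1 = vzero" and sq2: "M b2 b2 = smul k b1" and k: "k \<noteq> 0"
  shows "alg_isomorphic M A6"
proof (rule alg_isomorphic_A6_if_natural_basis[OF bil])
  show "natural_basis M (smul k b1) b2"
    using bil k nb by (rule natural_basis_smul_left)
  show "M (smul k b1) (smul k b1) = vzero"
    using sq1 by (simp add: bilinear2_smul_smul[OF bil])
qed (rule sq2)

lemma mul_in_alg_sq: "M x y \<in> alg_sq M"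
  unfolding alg_sq_def by (rule vspan_base) blast

lemma mul_mul_eq_vzero_if_alg_cube_eq_zero:
  assumes "alg_cube M = {vzero}"
  shows "M x (M y z) = vzero"
proof -
  have "M x (M y z) \<in> alg_cube M"
    unfolding alg_cube_def by (rule vspan_base) (blast intro: mul_in_alg_sq)
  then show ?thesis using assms by simp
qed

lemma vspan_subset_zero: "S \<subseteq> {vzero} \<Longrightarrow> vspan S \<subseteq> {vzero}"
proof
  fix w
  assume "w \<in> vspan S" and "S \<subseteq> {vzero}"
  then show "w \<in> {vzero}"
    by (induction rule: vspan.induct) auto
qed

lemma dim_one_has_nonzero:
  assumes "dim_one V"
  obtains v where "v \<in> V" and "v \<noteq> vzero"
proof -
  obtain v where "v \<noteq> vzero" and V: "V = {smul c v | c. True}"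
    using assms unfolding dim_one_def by blast
  moreover have "v = smul 1 v" by simp
  ultimately show thesis using that V by blast
qed

lemma dim_one_not_is_basis2:
  assumes "dim_one V" and "u \<in> V" and "w \<in> V"
  shows "\<not> is_basis2 u w"
  using assms not_is_basis2_smul_smul unfolding dim_one_def by blast

lemma mul_eq_vzero_if_squares_eq_vzero:
  assumes bil: "bilinear2 M" and nb: "natural_basis M b1 b2"
    and "M b1 b1 = vzero" and "M b2 b2 = vzero"
  shows "M x y = vzero"
proof -
  have basis: "is_basis2 b1 b2" and "M b1 b2 = vzero" and "M b2 b1 = vzero"
    using nb unfolding natural_basis_def by blast+
  moreover obtain s t where "x = vadd (smul s b1) (smul t b2)"
    using basis by (rule is_basis2_spans)
  moreover obtain s' t' where "y = vadd (smul s' b1) (smul t' b2)"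
    using basis by (rule is_basis2_spans)
  ultimately show ?thesis
    using assms by (simp add: bilinear2_lincomb_left[OF bil] bilinear2_lincomb_right[OF bil])
qed

lemma square_eq_smul_other_if_annihilated:
  assumes bil: "bilinear2 M" and nb: "natural_basis M b1 b2"
    and ann: "M b1 (M b1 b1) = vzero"
  obtains \<beta> where "M b1 b1 = smul \<beta> b2"
proof -
  have basis: "is_basis2 b1 b2" and "M b1 b2 = vzero"
    using nb unfolding natural_basis_def by blast+
  obtain \<alpha> \<beta> where sq: "M b1 b1 = vadd (smul \<alpha> b1) (smul \<beta> b2)"
    using basis by (rule is_basis2_spans)
  then have "M b1 (M b1 b1) = smul \<alpha> (M b1 b1)"
    using \<open>M b1 b2 = vzero\<close> by (simp add: bilinear2_lincomb_right[OF bil])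
  then have "smul \<alpha> (M b1 b1) = vzero"
    using ann by simp
  then have "\<alpha> = 0 \<or> M b1 b1 = vzero"
    by (simp only: smul_eq_vzero_iff)
  then show thesis
  proof
    assume "\<alpha> = 0"
    with sq show thesis by (intro that[of \<beta>]) (simp add: smul_def vadd_def)
  next
    assume "M b1 b1 = vzero"
    then show thesis by (intro that[of 0]) (simp add: smul_def vzero_def)
  qed
qed

lemma alg_isomorphic_A6_if_dim_one_alg_sq_alg_cube_eq_zero:
  fixes M :: "'a::field alg2"
  assumes ev: "evolution_algebra2 M" and sq: "dim_one (alg_sq M)" and cube: "alg_cube M = {vzero}"
  shows "alg_isomorphic M A6"
proof -
  obtain b1 b2 where bil: "bilinear2 M" and nb: "natural_basis M b1 b2"
    using ev unfolding evolution_algebra2_def by blast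
  then have nb': "natural_basis M b2 b1" by (simp add: natural_basis_commute)
  obtain \<beta> where \<beta>: "M b1 b1 = smul \<beta> b2"
    using bil nb mul_mul_eq_vzero_if_alg_cube_eq_zero[OF cube]
    by (rule square_eq_smul_other_if_annihilated)
  obtain \<gamma> where \<gamma>: "M b2 b2 = smul \<gamma> b1"
    using bil nb' mul_mul_eq_vzero_if_alg_cube_eq_zero[OF cube]
    by (rule square_eq_smul_other_if_annihilated)
  have "\<beta> = 0 \<or> \<gamma> = 0"
  proof (rule ccontr)
    assume "\<not> (\<beta> = 0 \<or> \<gamma> = 0)"
    then have "is_basis2 (M b1 b1) (M b2 b2)"
      using nb' unfolding \<beta> \<gamma> natural_basis_def
      by (simp add: is_basis2_smul_smul_iff is_basis2_commute[of b2])
    then show False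
      using dim_one_not_is_basis2[OF sq] mul_in_alg_sq by blast
  qed
  moreover have "\<beta> \<noteq> 0 \<or> \<gamma> \<noteq> 0"
  proof (rule ccontr)
    assume "\<not> (\<beta> \<noteq> 0 \<or> \<gamma> \<noteq> 0)"
    then have "M x y = vzero" for x y
      using mul_eq_vzero_if_squares_eq_vzero[OF bil nb] \<beta> \<gamma> by simp
    then have "alg_sq M \<subseteq> {vzero}"
      unfolding alg_sq_def by (intro vspan_subset_zero) blast
    then show False
      using sq by (metis dim_one_has_nonzero singletonD subsetD)
  qed
  ultimately show ?thesis
    using alg_isomorphic_A6_if_square_eq_smul[OF bil nb _ \<gamma>]
      alg_isomorphic_A6_if_square_eq_smul[OF bil nb' _ \<beta>] \<beta> \<gamma>
    by auto
qed

lemma bilinear2_A6: "bilinear2 A6"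
  unfolding bilinear2_def A6_def by (simp add: vadd_def smul_def algebra_simps)

lemma natural_basis_A6: "natural_basis A6 (1, 0) (0, 1)"
  unfolding natural_basis_def by (simp add: is_basis2_iff_det A6_def vzero_def)

lemma evolution_algebra2_A6: "evolution_algebra2 A6"
  unfolding evolution_algebra2_def using bilinear2_A6 natural_basis_A6 by blast

lemma alg_sq_A6: "alg_sq A6 = {smul c (1, 0) | c. True}"
proof (intro equalityI subsetI)
  fix w :: "'a vec2"
  assume "w \<in> alg_sq A6"
  then have "snd w = 0" unfolding alg_sq_def
    by (induction rule: vspan.induct) (auto simp: A6_def vzero_def vadd_def smul_def)
  then have "w = smul (fst w) (1, 0)" by (simp add: smul_def prod_eq_iff)
  then show "w \<in> {smul c (1, 0) | c. True}" by blast
next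
  fix w :: "'a vec2"
  assume "w \<in> {smul c (1, 0) | c. True}"
  then obtain c where "w = A6 (0, c) (0, 1)" by (auto simp: A6_def smul_def)
  then show "w \<in> alg_sq A6" by (simp add: mul_in_alg_sq)
qed

lemma alg_cube_A6: "alg_cube (A6 :: 'a::field alg2) = {vzero}"
proof
  have "A6 x y = vzero" if "y \<in> alg_sq A6" for x y
    using that by (auto simp: alg_sq_A6 A6_def smul_def vzero_def)
  then show "alg_cube A6 \<subseteq> {vzero}"
    unfolding alg_cube_def by (intro vspan_subset_zero) blast
qed (simp add: alg_cube_def vspan_zero)

lemma pseudo_square_A6:
  assumes nb: "natural_basis A6 b1 b2"
  shows "pseudo_square A6 b1 b2 = (if snd b1 = 0 then {T} else {D})"
proof -
  obtain a b c d where b12: "b1 = (a, b)" "b2 = (c, d)" by fastforce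
  have basis: "is_basis2 b1 b2" and "A6 b1 b2 = vzero"
    using nb unfolding natural_basis_def by blast+
  then have det: "a * d - b * c \<noteq> 0" and "b * d = 0"
    by (simp_all add: b12 is_basis2_iff_det A6_def vzero_def)
  show ?thesis
  proof (cases "b = 0")
    case True
    with det have "a \<noteq> 0" and "d \<noteq> 0" by auto
    have "coords b1 b2 (A6 b1 b1) = (0, 0)"
      by (rule coords_eq[OF basis]) (simp add: b12 True A6_def vadd_def smul_def)
    moreover have "coords b1 b2 (A6 b2 b2) = (d * d / a, 0)"
      by (rule coords_eq[OF basis]) (simp add: b12 True \<open>a \<noteq> 0\<close> A6_def vadd_def smul_def)
    ultimately show ?thesis
      using \<open>a \<noteq> 0\<close> \<open>d \<noteq> 0\<close> True unfolding pseudo_square_def by (auto simp: b12)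
  next
    case False
    with \<open>b * d = 0\<close> det have "d = 0" and "c \<noteq> 0" by auto
    have "coords b1 b2 (A6 b1 b1) = (0, b * b / c)"
      by (rule coords_eq[OF basis]) (simp add: b12 \<open>d = 0\<close> \<open>c \<noteq> 0\<close> A6_def vadd_def smul_def)
    moreover have "coords b1 b2 (A6 b2 b2) = (0, 0)"
      by (rule coords_eq[OF basis]) (simp add: b12 \<open>d = 0\<close> A6_def vadd_def smul_def)
    ultimately show ?thesis
      using \<open>c \<noteq> 0\<close> False unfolding pseudo_square_def by (auto simp: b12)
  qed
qed

lemma pseudo_square_in_alg_square:
  "natural_basis M b1 b2 \<Longrightarrow> pseudo_square M b1 b2 \<in> alg_square M"
  unfolding alg_square_def by blast

lemma alg_square_A6: "alg_square (A6 :: 'a::field alg2) = D6"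
proof
  show "alg_square (A6 :: 'a alg2) \<subseteq> D6"
    unfolding alg_square_def D6_def by (auto simp: pseudo_square_A6 split: if_splits)
  have nb: "natural_basis (A6 :: 'a alg2) (1, 0) (0, 1)"
    "natural_basis (A6 :: 'a alg2) (0, 1) (1, 0)"
    using natural_basis_A6 natural_basis_commute by blast+
  then show "D6 \<subseteq> alg_square (A6 :: 'a alg2)"
    using pseudo_square_in_alg_square[OF nb(1)] pseudo_square_in_alg_square[OF nb(2)]
    by (simp add: pseudo_square_A6 D6_def)
qed

lemma alg_associative_A6: "alg_associative (A6 :: 'a::field alg2)"
  unfolding alg_associative_def by (simp add: A6_def)

theorem proposition3p12:
  shows "evolution_algebra2 (A6 :: 'a::field alg2) \<and> dim_one (alg_sq (A6 :: 'a alg2))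
     \<and> alg_cube (A6 :: 'a alg2) = {vzero}
     \<and> (\<forall>M :: 'a alg2. evolution_algebra2 M \<and> dim_one (alg_sq M) \<and> alg_cube M = {vzero}
           \<longrightarrow> alg_isomorphic M A6)
     \<and> alg_square (A6 :: 'a alg2) = D6
     \<and> alg_associative (A6 :: 'a alg2)"
proof (intro conjI allI impI)
  show "dim_one (alg_sq (A6 :: 'a alg2))"
    unfolding dim_one_def alg_sq_A6 by (intro exI[of _ "(1, 0)"]) (simp add: vzero_def)
  show "alg_isomorphic M A6"
    if "evolution_algebra2 M \<and> dim_one (alg_sq M) \<and> alg_cube M = {vzero}" for M :: "'a alg2"
    using that alg_isomorphic_A6_if_dim_one_alg_sq_alg_cube_eq_zero by blast
qed (simp_all add: evolution_algebra2_A6 alg_cube_A6 alg_square_A6 alg_associative_A6)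

end
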